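(* Let $D$ be a digraph with $n$ vertices that contains a directed cycle, and let $g$ be its girth. Then $\chi(D)\leq \left\lfloor\frac{n-1}{g-1}\right\rfloor+1$.
   Context: All digraphs are finite, loopless and strict (at most one edge from $u$ to $v$ for distinct $u,v$). The girth is the length of a shortest directed cycle. A subset $S\subseteq V(D)$ is acyclic if $D[S]$ contains no directed cycle; a proper $k$-coloring of $D$ is a partition of $V(D)$ into at most $k$ acyclic subsets, and $\chi(D)$ is the minimum $k$ for which $D$ has a proper $k$-coloring. *)

theory Defs
  imports Main
begin

definition digraph :: "'a set \<Rightarrow> ('a \<times> 'a) set \<Rightarrow> bool" where
  "digraph V E \<longleftrightarrow> finite V \<and> E \<subseteq> V \<times> V \<and> (\<forall>v. (v, v) \<notin> E)"

definition is_dcycle_in :: "('a \<times> 'a) set \<Rightarrow> 'a set \<Rightarrow> 'a list \<Rightarrow> bool" where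
  "is_dcycle_in E S cs \<longleftrightarrow> length cs \<ge> 2 \<and> distinct cs \<and> set cs \<subseteq> S \<and>
     (\<forall>i < length cs. (cs ! i, cs ! ((i + 1) mod length cs)) \<in> E)"

definition has_dcycle :: "'a set \<Rightarrow> ('a \<times> 'a) set \<Rightarrow> bool" where
  "has_dcycle V E \<longleftrightarrow> (\<exists>cs. is_dcycle_in E V cs)"

definition girth :: "'a set \<Rightarrow> ('a \<times> 'a) set \<Rightarrow> nat" where
  "girth V E = (LEAST k. \<exists>cs. is_dcycle_in E V cs \<and> length cs = k)"

definition acyclic_set :: "('a \<times> 'a) set \<Rightarrow> 'a set \<Rightarrow> bool" where
  "acyclic_set E S \<longleftrightarrow> \<not> (\<exists>cs. is_dcycle_in E S cs)"

definition proper_coloring :: "'a set \<Rightarrow> ('a \<times> 'a) set \<Rightarrow> nat \<Rightarrow> ('a \<Rightarrow> nat) \<Rightarrow> bool" where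
  "proper_coloring V E k c \<longleftrightarrow> (\<forall>v\<in>V. c v < k) \<and>
     (\<forall>i < k. acyclic_set E {v \<in> V. c v = i})"

definition dichromatic_number :: "'a set \<Rightarrow> ('a \<times> 'a) set \<Rightarrow> nat" where
  "dichromatic_number V E = (LEAST k. \<exists>c. proper_coloring V E k c)"

end

theory Submission
  imports Defs
begin

text \<open>A directed cycle has as many distinct vertices as its length, so every set of fewer
  than g vertices is acyclic. Enumerating V as 0, ..., n - 1 and cutting this enumeration
  into consecutive blocks of g - 1 vertices therefore gives a proper colouring with
  (n - 1) div (g - 1) + 1 colours.\<close>

lemma girth_le_dcycle_length:
  assumes "is_dcycle_in E V cs"
  shows "girth V E \<le> length cs"
  unfolding girth_def by (rule Least_le) (use assms in blast)

lemma girth_ge_2: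
  assumes "has_dcycle V E"
  shows "girth V E \<ge> 2"
proof -
  have "\<exists>cs. is_dcycle_in E V cs \<and> length cs = girth V E"
    unfolding girth_def by (rule LeastI_ex) (use assms in \<open>auto simp: has_dcycle_def\<close>)
  then show ?thesis by (auto simp: is_dcycle_in_def)
qed

lemma is_dcycle_in_mono:
  assumes "is_dcycle_in E S cs" and "S \<subseteq> T"
  shows "is_dcycle_in E T cs"
  using assms by (auto simp: is_dcycle_in_def)

lemma acyclic_set_if_card_less_girth:
  assumes "finite S" and "S \<subseteq> V" and "card S < girth V E"
  shows "acyclic_set E S"
  unfolding acyclic_set_def
proof
  assume "\<exists>cs. is_dcycle_in E S cs"
  then obtain cs where cs: "is_dcycle_in E S cs" ..
  have "girth V E \<le> length cs"
    using is_dcycle_in_mono[OF cs assms(2)] by (rule girth_le_dcycle_length)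
  also have "\<dots> = card (set cs)"
    using cs by (simp add: is_dcycle_in_def distinct_card)
  also have "\<dots> \<le> card S"
    using cs assms(1) by (intro card_mono) (auto simp: is_dcycle_in_def)
  finally show False using assms(3) by simp
qed

lemma card_div_fibre_le:
  fixes f :: "'a \<Rightarrow> nat"
  assumes "inj_on f A" and "m > 0"
  shows "card {x \<in> A. f x div m = i} \<le> m"
proof -
  have "f ` {x \<in> A. f x div m = i} \<subseteq> {i * m..<i * m + m}"
  proof
    fix y assume "y \<in> f ` {x \<in> A. f x div m = i}"
    then obtain x where "y = f x" and "f x div m = i" by auto
    moreover have "f x div m * m \<le> f x" and "f x < f x div m * m + m"
      using assms(2) div_times_less_eq_dividend[of "f x" m] mod_less_divisor[of m "f x"]
        div_mult_mod_eq[of "f x" m] by linarith+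
    ultimately show "y \<in> {i * m..<i * m + m}" by auto
  qed
  from card_inj_on_le[OF inj_on_subset[OF assms(1)] this] show ?thesis by simp
qed

lemma dichromatic_number_le_if_small_sets_acyclic:
  assumes "finite V" and "m > 0"
    and small_acyclic: "\<And>S. S \<subseteq> V \<Longrightarrow> card S \<le> m \<Longrightarrow> acyclic_set E S"
  shows "dichromatic_number V E \<le> (card V - 1) div m + 1"
proof -
  obtain f where f: "bij_betw f V {0..<card V}"
    using ex_bij_betw_finite_nat[OF assms(1)] by blast
  define k where "k = (card V - 1) div m + 1"
  have "proper_coloring V E k (\<lambda>v. f v div m)"
    unfolding proper_coloring_def
  proof (intro conjI ballI allI impI)
    fix v assume "v \<in> V"
    then have "f v < card V" using f by (auto simp: bij_betw_def)
    then have "f v \<le> card V - 1" by simp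
    then show "f v div m < k" unfolding k_def using div_le_mono by (simp add: le_imp_less_Suc)
  next
    fix i
    have "card {v \<in> V. f v div m = i} \<le> m"
      using f assms(2) by (intro card_div_fibre_le) (auto simp: bij_betw_def)
    then show "acyclic_set E {v \<in> V. f v div m = i}" by (intro small_acyclic) auto
  qed
  then show ?thesis
    unfolding dichromatic_number_def k_def by (intro Least_le) blast
qed

theorem mainTheorem7:
  fixes V :: "'a set" and E :: "('a \<times> 'a) set"
  assumes "digraph V E" and "has_dcycle V E"
  shows "dichromatic_number V E \<le> (card V - 1) div (girth V E - 1) + 1"
proof (rule dichromatic_number_le_if_small_sets_acyclic)
  show "finite V" using assms(1) by (simp add: digraph_def)
  show "girth V E - 1 > 0" using girth_ge_2[OF assms(2)] by simp
  fix S assume "S \<subseteq> V" and "card S \<le> girth V E - 1"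
  moreover have "finite S" using \<open>finite V\<close> \<open>S \<subseteq> V\<close> by (rule rev_finite_subset)
  ultimately show "acyclic_set E S"
    using girth_ge_2[OF assms(2)] by (intro acyclic_set_if_card_less_girth) auto
qed

end
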